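(* Consider a graph $G=(V, E)$ that has no isolated vertices and where each node has a $b$-bit identifier. There is a deterministic distributed algorithm in the $\mathsf{CONGEST}$ model that, in $O(\log^* b)$ rounds, colors the vertices of $V$ blue or red such that each color has at most $3|V|/4$ vertices.
   Context: Identifiers are unique. $\mathsf{CONGEST}$ model: synchronous rounds on the network $G$, per round each node sends one message of $O(b)$ bits (the identifier length) to each neighbor; nodes initially know only local information, and at the end each node knows its own color. $\log^*$ denotes the iterated logarithm. *)

theory Defs
  imports Complex_Main
begin

definition log_star :: "nat \<Rightarrow> nat" where
  "log_star b = (LEAST k. ((\<lambda>x::real. log 2 x) ^^ k) (real b) \<le> 1)"

definition simple_graph :: "nat set \<Rightarrow> (nat \<Rightarrow> nat \<Rightarrow> bool) \<Rightarrow> bool" where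
  "simple_graph V E \<longleftrightarrow> finite V \<and> (\<forall>u v. E u v \<longrightarrow> u \<in> V \<and> v \<in> V)
     \<and> (\<forall>u v. E u v \<longrightarrow> E v u) \<and> (\<forall>v. \<not> E v v)"

definition nbrs :: "nat set \<Rightarrow> (nat \<Rightarrow> nat \<Rightarrow> bool) \<Rightarrow> nat \<Rightarrow> nat set" where
  "nbrs V E v = {u \<in> V. E v u}"

definition deg :: "nat set \<Rightarrow> (nat \<Rightarrow> nat \<Rightarrow> bool) \<Rightarrow> nat \<Rightarrow> nat" where
  "deg V E v = card (nbrs V E v)"

definition no_isolated :: "nat set \<Rightarrow> (nat \<Rightarrow> nat \<Rightarrow> bool) \<Rightarrow> bool" where
  "no_isolated V E \<longleftrightarrow> (\<forall>v\<in>V. \<exists>u\<in>V. E v u)"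

definition valid_ids :: "nat set \<Rightarrow> nat \<Rightarrow> (nat \<Rightarrow> nat) \<Rightarrow> bool" where
  "valid_ids V b ident \<longleftrightarrow> inj_on ident V \<and> (\<forall>v\<in>V. ident v < 2 ^ b)"

definition port_numbering ::
  "nat set \<Rightarrow> (nat \<Rightarrow> nat \<Rightarrow> bool) \<Rightarrow> (nat \<Rightarrow> nat \<Rightarrow> nat) \<Rightarrow> bool" where
  "port_numbering V E port \<longleftrightarrow>
     (\<forall>v\<in>V. bij_betw (port v) {..<deg V E v} (nbrs V E v))"

definition back_port ::
  "nat set \<Rightarrow> (nat \<Rightarrow> nat \<Rightarrow> bool) \<Rightarrow> (nat \<Rightarrow> nat \<Rightarrow> nat) \<Rightarrow> nat \<Rightarrow> nat \<Rightarrow> nat" where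
  "back_port V E port u v = (THE j. j < deg V E u \<and> port u j = v)"

text \<open>Local states are arbitrary finite data (encoded as nat lists; local computation
is unrestricted).  Every node initially knows the identifier length b, its own
identifier and its degree.  In each round, a node computes a message (a bit string)
for each of its ports from its state, and then updates its state from its state and
the messages received on each of its ports.  After a_rounds b rounds each node
outputs its colour (True = blue, False = red).\<close>

record algo =
  a_init :: "nat \<Rightarrow> nat \<Rightarrow> nat \<Rightarrow> nat list"
  a_send :: "nat \<Rightarrow> nat list \<Rightarrow> nat \<Rightarrow> bool list"
  a_trans :: "nat \<Rightarrow> nat list \<Rightarrow> (nat \<Rightarrow> bool list) \<Rightarrow> nat list"
  a_out :: "nat list \<Rightarrow> bool"
  a_rounds :: "nat \<Rightarrow> nat"

fun run :: "algo \<Rightarrow> nat set \<Rightarrow> (nat \<Rightarrow> nat \<Rightarrow> bool) \<Rightarrow> nat \<Rightarrow> (nat \<Rightarrow> nat)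
            \<Rightarrow> (nat \<Rightarrow> nat \<Rightarrow> nat) \<Rightarrow> nat \<Rightarrow> nat \<Rightarrow> nat list" where
  "run A V E b ident port 0 v = a_init A b (ident v) (deg V E v)"
| "run A V E b ident port (Suc t) v =
     a_trans A b (run A V E b ident port t v)
       (\<lambda>i. if i < deg V E v then
              a_send A b (run A V E b ident port t (port v i)) (back_port V E port (port v i) v)
            else [])"

definition congest_bandwidth :: "algo \<Rightarrow> nat \<Rightarrow> nat set \<Rightarrow> (nat \<Rightarrow> nat \<Rightarrow> bool)
    \<Rightarrow> nat \<Rightarrow> (nat \<Rightarrow> nat) \<Rightarrow> (nat \<Rightarrow> nat \<Rightarrow> nat) \<Rightarrow> bool" where
  "congest_bandwidth A C V E b ident port \<longleftrightarrow>
     (\<forall>t < a_rounds A b. \<forall>v\<in>V. \<forall>i < deg V E v.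
        length (a_send A b (run A V E b ident port t v) i) \<le> C * b)"

definition output_colour :: "algo \<Rightarrow> nat set \<Rightarrow> (nat \<Rightarrow> nat \<Rightarrow> bool) \<Rightarrow> nat
    \<Rightarrow> (nat \<Rightarrow> nat) \<Rightarrow> (nat \<Rightarrow> nat \<Rightarrow> nat) \<Rightarrow> nat \<Rightarrow> bool" where
  "output_colour A V E b ident port v = a_out A (run A V E b ident port (a_rounds A b) v)"

end

theory Submission
  imports Defs
begin

(* Every node takes its neighbour behind port 0 as its parent; the parent pointers form a
   pseudoforest.  Cole-Vishkin colour reduction along these pointers turns the b-bit
   identifiers into a proper colouring with 8 colours in log* b + 2 rounds.  Treating one
   colour class at a time, unmatched nodes of that colour offer themselves to their parent,
   which accepts its first offer; after the 8 classes the accepted parent edges form a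
   matching in which the parent of every unmatched node is matched.  In a matched pair the
   parent is blue and the child red, and every matched node colours its unmatched children
   alternately red and blue in port order.  A node with k unmatched children gives each colour
   to at least (k - 1)/2 of them, so a matched pair together with the f unmatched children of
   its two endpoints contains at least max 1 (f/2) >= (f + 2)/4 nodes of each colour. *)

fun bits_of_nat :: "nat \<Rightarrow> nat \<Rightarrow> bool list" where
  "bits_of_nat 0 n = []"
| "bits_of_nat (Suc w) n = odd n # bits_of_nat w (n div 2)"

fun nat_of_bits :: "bool list \<Rightarrow> nat" where
  "nat_of_bits [] = 0"
| "nat_of_bits (x # xs) = of_bool x + 2 * nat_of_bits xs"

lemma length_bits_of_nat [simp]: "length (bits_of_nat w n) = w"
  by (induction w arbitrary: n) auto

lemma nat_of_bits_of_nat: "n < 2 ^ w \<Longrightarrow> nat_of_bits (bits_of_nat w n) = n"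
  by (induction w arbitrary: n) auto

section \<open>Cole-Vishkin colour reduction\<close>

definition cole_vishkin :: "nat \<Rightarrow> nat \<Rightarrow> nat" where
  "cole_vishkin a c = (let i = LEAST i. bit a i \<noteq> bit c i in 2 * i + of_bool (bit a i))"

lemma bit_Least_neq:
  fixes a c :: nat
  assumes "a \<noteq> c"
  shows "bit a (LEAST i. bit a i \<noteq> bit c i) \<noteq> bit c (LEAST i. bit a i \<noteq> bit c i)"
proof -
  have "\<exists>i. bit a i \<noteq> bit c i"
    using assms bit_eq_iff by blast
  then show ?thesis
    by (rule LeastI_ex)
qed

lemma cole_vishkin_neq:
  assumes "a \<noteq> c" "c \<noteq> e"
  shows "cole_vishkin a c \<noteq> cole_vishkin c e"
proof
  assume "cole_vishkin a c = cole_vishkin c e"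
  define i where "i = (LEAST i. bit a i \<noteq> bit c i)"
  define j where "j = (LEAST i. bit c i \<noteq> bit e i)"
  have "2 * i + of_bool (bit a i) = 2 * j + of_bool (bit c j)"
    using \<open>cole_vishkin a c = cole_vishkin c e\<close>
    unfolding cole_vishkin_def Let_def i_def[symmetric] j_def[symmetric] .
  then have "i = j" and "bit a i = bit c j"
    by (auto simp: of_bool_def split: if_splits; presburger)+
  with bit_Least_neq[OF assms(1)] show False
    by (simp add: i_def)
qed

lemma cole_vishkin_less:
  assumes "a \<noteq> c" "a < 2 ^ L" "c < 2 ^ L"
  shows "cole_vishkin a c < 2 * L"
proof -
  define i where "i = (LEAST i. bit a i \<noteq> bit c i)"
  have "bit a i \<noteq> bit c i"
    unfolding i_def by (rule bit_Least_neq[OF assms(1)])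
  with assms(2,3) have "i < L"
    by (metis bit_take_bit_iff take_bit_nat_eq_self_iff)
  then show ?thesis
    unfolding cole_vishkin_def Let_def i_def[symmetric] by simp
qed

lemma two_mul_le_two_power: "2 * n \<le> (2::nat) ^ n"
proof (induction n)
  case (Suc n)
  then show ?case
    by (cases n) auto
qed simp

(* One Cole-Vishkin step maps colours below 2^L to colours below 2 L, which fit into
   next_width L bits. *)
definition next_width :: "nat \<Rightarrow> nat" where
  "next_width L = (LEAST w. 2 * L \<le> 2 ^ w)"

lemma next_width_spec: "2 * L \<le> 2 ^ next_width L"
  unfolding next_width_def by (rule LeastI[of _ L]) (rule two_mul_le_two_power)

lemma next_width_le: "2 * L \<le> 2 ^ w \<Longrightarrow> next_width L \<le> w"
  unfolding next_width_def by (rule Least_le)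

lemma next_width_le_self: "next_width L \<le> L"
  by (rule next_width_le[OF two_mul_le_two_power])

lemma funpow_next_width_le: "(next_width ^^ k) L \<le> L"
  by (induction k) (auto intro: le_trans[OF next_width_le_self])

lemma next_width_pos: "0 < L \<Longrightarrow> 0 < next_width L"
  using next_width_spec[of L] by (cases "next_width L") auto

lemma next_width_le_log:
  assumes "0 < L"
  shows "real (next_width L) \<le> log 2 (real L) + 2"
proof -
  obtain w where w: "next_width L = Suc w"
    using next_width_pos[OF assms] by (cases "next_width L") auto
  have "2 ^ w < 2 * L"
    using next_width_le[of L w] w by linarith
  then have "real w < log 2 (real (2 * L))"
    by (rule less_log2_of_power)
  also have "\<dots> = log 2 (real L) + 1"
    using assms by (simp add: log_mult)
  finally show ?thesis
    using w by simp
qed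

section \<open>Iterated logarithm\<close>

abbreviation iter_log2 :: "nat \<Rightarrow> real \<Rightarrow> real" where
  "iter_log2 k \<equiv> (\<lambda>x. log 2 x) ^^ k"

lemma log2_le_pred:
  assumes "0 < m"
  shows "log 2 (real m) \<le> real m - 1"
proof -
  have "2 * m \<le> 2 * 2 ^ (m - 1)"
    using two_mul_le_two_power[of m] assms by (cases m) auto
  then have "log 2 (real m) \<le> real (m - 1)"
    using assms by (intro log2_of_power_le) auto
  then show ?thesis
    using assms by (simp add: of_nat_diff)
qed

lemma iter_log2_le_diff: "(\<forall>j<k. 1 < iter_log2 j (real b)) \<Longrightarrow> iter_log2 k (real b) \<le> real (b - k)"
proof (induction k)
  case (Suc k)
  have IH: "iter_log2 k (real b) \<le> real (b - k)" and gt: "1 < iter_log2 k (real b)"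
    using Suc by auto
  then have pos: "0 < b - k"
    by linarith
  have "iter_log2 (Suc k) (real b) \<le> log 2 (real (b - k))"
    using IH gt by (simp add: log_mono)
  also have "\<dots> \<le> real (b - Suc k)"
    using log2_le_pred[OF pos] pos by (simp add: of_nat_diff)
  finally show ?case .
qed simp

lemma iter_log2_log_star: "iter_log2 (log_star b) (real b) \<le> 1"
proof -
  have "\<exists>k. iter_log2 k (real b) \<le> 1"
  proof (cases "\<forall>j<b. 1 < iter_log2 j (real b)")
    case True
    then show ?thesis
      using iter_log2_le_diff[of b b] by (intro exI[of _ b]) auto
  qed (auto simp: not_less)
  then show ?thesis
    unfolding log_star_def by (rule LeastI_ex)
qed

lemma less_log_star: "k < log_star b \<Longrightarrow> 1 < iter_log2 k (real b)"
  unfolding log_star_def using not_less_Least by force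

lemma funpow_next_width_le_iter_log2:
  assumes "0 < b" "k \<le> log_star b"
  shows "real ((next_width ^^ k) b) \<le> iter_log2 k (real b) + 5"
  using assms(2)
proof (induction k)
  case (Suc k)
  let ?L = "(next_width ^^ k) b" and ?x = "iter_log2 k (real b)"
  have pos: "0 < ?L"
    using assms(1) next_width_pos by (induction k) auto
  have gt: "1 < ?x"
    using Suc.prems less_log_star by simp
  have "real ((next_width ^^ Suc k) b) \<le> log 2 (real ?L) + 2"
    using next_width_le_log[OF pos] by simp
  also have "\<dots> \<le> log 2 (8 * ?x) + 2" \<comment> \<open>as \<open>?x + 5 \<le> 8 * ?x\<close>\<close>
    using Suc pos gt by (intro add_right_mono log_mono) auto
  also have "\<dots> = iter_log2 (Suc k) (real b) + 5"
    using gt log_nat_power[of 2 2 3] by (simp add: log_mult)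
  finally show ?case .
qed simp

lemma funpow_next_width_log_star:
  assumes "0 < b"
  shows "(next_width ^^ (log_star b + 2)) b \<le> 3"
proof -
  have "(next_width ^^ log_star b) b \<le> 6"
    using funpow_next_width_le_iter_log2[OF assms order_refl] iter_log2_log_star[of b] by linarith
  then have "(next_width ^^ Suc (log_star b)) b \<le> 4"
    by (auto intro: next_width_le)
  then show ?thesis
    by (auto intro: next_width_le)
qed

lemma card_odd_rank:
  fixes S :: "'a::linorder set"
  assumes "finite S"
  shows "card {x\<in>S. odd (card {y\<in>S. y < x})} = card S div 2"
  using assms
proof (induction S rule: finite_linorder_max_induct)
  case (insert a S)
  have "{x\<in>insert a S. odd (card {y\<in>insert a S. y < x})} =
        (if odd (card S) then insert a {x\<in>S. odd (card {y\<in>S. y < x})}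
         else {x\<in>S. odd (card {y\<in>S. y < x})})"
  proof -
    have "{y\<in>insert a S. y < x} = {y\<in>S. y < x}" if "x \<in> S" for x
      using insert that by auto
    moreover have "{y\<in>insert a S. y < a} = S"
      using insert by auto
    ultimately show ?thesis
      using insert by auto
  qed
  moreover have "a \<notin> S"
    using insert by auto
  ultimately show ?case
    using insert by (auto simp: card_insert_if)
qed simp

lemma card_split_by_pred:
  assumes "finite A"
  shows "card A = card {x\<in>A. P x} + card {x\<in>A. \<not> P x}"
  using assms by (subst card_Un_disjoint[symmetric]) (auto intro: arg_cong[where f = card])

lemma card_even_rank:
  fixes S :: "'a::linorder set"
  assumes "finite S"
  shows "card {x\<in>S. even (card {y\<in>S. y < x})} = card S - card S div 2"
proof -
  have "card S = card {x\<in>S. even (card {y\<in>S. y < x})} + card {x\<in>S. odd (card {y\<in>S. y < x})}"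
    by (rule card_split_by_pred[OF assms])
  then show ?thesis
    using card_odd_rank[OF assms] by simp
qed

lemma quarter_split_bound:
  fixes f :: "'a \<Rightarrow> nat"
  assumes "card U = 2 * p" "n = card U + (\<Sum>u\<in>U. f u)" "n = x + y"
    and "p + (\<Sum>u\<in>U. f u div 2) \<le> x" "p + (\<Sum>u\<in>U. f u - f u div 2) \<le> y"
  shows "4 * x \<le> 3 * n \<and> 4 * y \<le> 3 * n"
proof -
  have "(\<Sum>u\<in>U. f u) \<le> (\<Sum>u\<in>U. 4 * (f u div 2) + 1)"
    by (intro sum_mono) auto
  also have "\<dots> = 4 * (\<Sum>u\<in>U. f u div 2) + card U"
    by (subst sum.distrib) (simp add: sum_distrib_left)
  finally have "(\<Sum>u\<in>U. f u) \<le> 4 * (\<Sum>u\<in>U. f u div 2) + card U" .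
  moreover have "(\<Sum>u\<in>U. f u) \<le> (\<Sum>u\<in>U. 2 * (f u - f u div 2))"
    by (intro sum_mono) auto
  then have "(\<Sum>u\<in>U. f u) \<le> 2 * (\<Sum>u\<in>U. f u - f u div 2)"
    by (simp add: sum_distrib_left)
  ultimately show ?thesis
    using assms by linarith
qed

section \<open>Matchings of parent edges\<close>

locale ported_graph =
  fixes V :: "nat set" and E :: "nat \<Rightarrow> nat \<Rightarrow> bool" and port :: "nat \<Rightarrow> nat \<Rightarrow> nat"
  assumes simple: "simple_graph V E" and nonisolated: "no_isolated V E"
    and ports: "port_numbering V E port"
begin

definition parent :: "nat \<Rightarrow> nat" where
  "parent v = port v 0"

definition port_at_parent :: "nat \<Rightarrow> nat" where
  "port_at_parent v = back_port V E port (parent v) v"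

lemma finite_V: "finite V"
  using simple by (simp add: simple_graph_def)

lemma edge_sym: "E u v \<Longrightarrow> E v u"
  using simple by (simp add: simple_graph_def)

lemma edge_in_V: "E u v \<Longrightarrow> u \<in> V \<and> v \<in> V"
  using simple by (simp add: simple_graph_def)

lemma no_loop: "\<not> E v v"
  using simple by (simp add: simple_graph_def)

lemma bij_betw_port: "v \<in> V \<Longrightarrow> bij_betw (port v) {..<deg V E v} (nbrs V E v)"
  using ports by (simp add: port_numbering_def)

lemma port_neighbour: "v \<in> V \<Longrightarrow> i < deg V E v \<Longrightarrow> E v (port v i) \<and> port v i \<in> V"
  using bij_betw_apply[OF bij_betw_port] by (auto simp: nbrs_def)

lemma inj_on_port: "v \<in> V \<Longrightarrow> inj_on (port v) {..<deg V E v}"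
  using bij_betw_port by (rule bij_betw_imp_inj_on)

lemma back_port_eq: "u \<in> V \<Longrightarrow> j < deg V E u \<Longrightarrow> back_port V E port u (port u j) = j"
  unfolding back_port_def using inj_on_port by (intro the_equality) (auto dest: inj_onD)

lemma back_port:
  assumes "u \<in> V" "E u v"
  shows "back_port V E port u v < deg V E u \<and> port u (back_port V E port u v) = v"
proof -
  have "v \<in> nbrs V E u"
    using assms edge_in_V by (auto simp: nbrs_def)
  then obtain j where "j < deg V E u" "port u j = v"
    using bij_betw_imp_surj_on[OF bij_betw_port[OF assms(1)]] by (metis imageE lessThan_iff)
  then show ?thesis
    using back_port_eq assms by auto
qed

lemma deg_pos: "v \<in> V \<Longrightarrow> 0 < deg V E v"
  using nonisolated finite_V
  by (auto simp: no_isolated_def deg_def nbrs_def card_gt_0_iff)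

lemma parent: "v \<in> V \<Longrightarrow> parent v \<in> V \<and> E (parent v) v \<and> parent v \<noteq> v"
  using port_neighbour[OF _ deg_pos] no_loop edge_sym unfolding parent_def by metis

lemma port_at_parent:
  "v \<in> V \<Longrightarrow> port_at_parent v < deg V E (parent v) \<and> port (parent v) (port_at_parent v) = v"
  unfolding port_at_parent_def using back_port parent by blast

lemma back_port_eq_0_iff: "w \<in> V \<Longrightarrow> E w v \<Longrightarrow> back_port V E port w v = 0 \<longleftrightarrow> parent w = v"
  using back_port back_port_eq[OF _ deg_pos] unfolding parent_def by metis

(* m v = 0: v is unmatched; m v = 1: v is matched to its parent;
   m v = i + 2: v is matched to the child behind its port i. *)
definition matching :: "(nat \<Rightarrow> nat) \<Rightarrow> bool" where
  "matching m \<longleftrightarrow> (\<forall>v\<in>V.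
     (m v = 1 \<longrightarrow> m (parent v) = port_at_parent v + 2) \<and>
     (\<forall>i. m v = i + 2 \<longrightarrow> i < deg V E v \<and> parent (port v i) = v \<and> m (port v i) = 1))"

definition unmatched_have_matched_parent :: "(nat \<Rightarrow> nat) \<Rightarrow> bool" where
  "unmatched_have_matched_parent m \<longleftrightarrow> (\<forall>v\<in>V. m v = 0 \<longrightarrow> m (parent v) \<noteq> 0)"

definition candidate :: "(nat \<Rightarrow> nat) \<Rightarrow> (nat \<Rightarrow> nat) \<Rightarrow> nat \<Rightarrow> nat \<Rightarrow> nat \<Rightarrow> bool" where
  "candidate col m j v i \<longleftrightarrow>
     i < deg V E v \<and> parent (port v i) = v \<and> m (port v i) = 0 \<and> col (port v i) = j"

definition pick_child :: "(nat \<Rightarrow> nat) \<Rightarrow> (nat \<Rightarrow> nat) \<Rightarrow> nat \<Rightarrow> nat \<Rightarrow> nat" where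
  "pick_child col m j v =
     (if m v = 0 \<and> col v \<noteq> j \<and> (\<exists>i. candidate col m j v i)
      then (LEAST i. candidate col m j v i) + 2 else m v)"

(* Stage j: unmatched nodes of a colour other than j pick their first unmatched child of colour
   j, and the picked children accept.  Nodes of colour j only accept and, by properness, their
   parents only pick, so no node is matched twice. *)
primrec greedy_matching :: "(nat \<Rightarrow> nat) \<Rightarrow> nat \<Rightarrow> nat \<Rightarrow> nat" where
  "greedy_matching col 0 v = 0"
| "greedy_matching col (Suc j) v =
     (if greedy_matching col j v = 0 \<and> col v = j
         \<and> pick_child col (greedy_matching col j) j (parent v) = port_at_parent v + 2
      then 1 else pick_child col (greedy_matching col j) j v)"

lemma greedy_matching_Suc_keep:
  "greedy_matching col j v \<noteq> 0 \<Longrightarrow> greedy_matching col (Suc j) v = greedy_matching col j v"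
  by (simp add: pick_child_def)

context
  fixes col :: "nat \<Rightarrow> nat"
  assumes proper: "\<forall>v\<in>V. col v \<noteq> col (parent v)"
begin

lemma greedy_matching_Suc_eq_1:
  assumes "matching (greedy_matching col j)" "v \<in> V" "greedy_matching col (Suc j) v = 1"
  shows "greedy_matching col (Suc j) (parent v) = port_at_parent v + 2"
proof -
  let ?m = "greedy_matching col j" and ?h = "pick_child col (greedy_matching col j) j"
  show ?thesis
  proof (cases "?m v = 0")
    case False
    then have "?m v = 1"
      using assms(3) greedy_matching_Suc_keep by simp
    then have "?m (parent v) = port_at_parent v + 2"
      using assms(1,2) by (auto simp: matching_def)
    then show ?thesis
      using greedy_matching_Suc_keep by simp
  next
    case True
    have "?h v \<noteq> 1"
      by (auto simp: pick_child_def True)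
    then have "col v = j" "?h (parent v) = port_at_parent v + 2"
      using assms(3) by (metis greedy_matching.simps(2))+
    moreover have "col (parent v) \<noteq> j"
      using proper assms(2) \<open>col v = j\<close> by auto
    ultimately show ?thesis
      by simp
  qed
qed

lemma greedy_matching_Suc_ge_2:
  assumes "matching (greedy_matching col j)" "v \<in> V" "greedy_matching col (Suc j) v = i + 2"
  shows "i < deg V E v \<and> parent (port v i) = v \<and> greedy_matching col (Suc j) (port v i) = 1"
proof -
  let ?m = "greedy_matching col j" and ?h = "pick_child col (greedy_matching col j) j"
  show ?thesis
  proof (cases "?m v = 0")
    case False
    then have "?m v = i + 2"
      using assms(3) greedy_matching_Suc_keep by simp
    then show ?thesis
      using assms(1,2) greedy_matching_Suc_keep by (fastforce simp: matching_def)
  next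
    case True
    have "col v \<noteq> j"
    proof
      assume "col v = j"
      then have "?h v = 0"
        using True by (simp add: pick_child_def)
      then have "greedy_matching col (Suc j) v \<le> 1"
        by simp
      with assms(3) show False
        by simp
    qed
    then have "?h v = i + 2"
      using assms(3) by simp
    then have cand: "candidate col ?m j v i" and "?h v = i + 2"
      using True by (auto simp: pick_child_def intro: LeastI_ex split: if_splits)
    then have "parent (port v i) = v" "port_at_parent (port v i) = i"
      using back_port_eq[OF assms(2)] by (auto simp: candidate_def port_at_parent_def)
    with cand \<open>?h v = i + 2\<close> show ?thesis
      by (simp add: candidate_def)
  qed
qed

lemma matching_greedy_matching: "matching (greedy_matching col j)"
proof (induction j)
  case 0
  then show ?case
    by (simp add: matching_def)
next
  case (Suc j)
  show ?case
    unfolding matching_def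
    using greedy_matching_Suc_eq_1[OF Suc.IH] greedy_matching_Suc_ge_2[OF Suc.IH] by blast
qed

lemma greedy_matching_parent_matched:
  "v \<in> V \<Longrightarrow> col v < j \<Longrightarrow> greedy_matching col j v = 0 \<Longrightarrow> greedy_matching col j (parent v) \<noteq> 0"
proof (induction j)
  case (Suc j)
  let ?m = "greedy_matching col j" and ?h = "pick_child col (greedy_matching col j) j"
  have unmatched: "?m v = 0"
    using Suc.prems(3) greedy_matching_Suc_keep by fastforce
  show ?case
  proof (cases "?m (parent v) = 0")
    case False
    then show ?thesis
      using greedy_matching_Suc_keep by simp
  next
    case True
    then have "col v = j"
      using Suc unmatched by fastforce
    then have "col (parent v) \<noteq> j"
      using proper Suc.prems(1) by auto
    moreover have "candidate col ?m j (parent v) (port_at_parent v)"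
      using port_at_parent[OF Suc.prems(1)] unmatched \<open>col v = j\<close> by (simp add: candidate_def)
    ultimately have "?h (parent v) \<noteq> 0"
      using True by (auto simp: pick_child_def)
    then show ?thesis
      using \<open>col (parent v) \<noteq> j\<close> by simp
  qed
qed simp

lemma unmatched_have_matched_parent_greedy_matching:
  assumes "\<forall>v\<in>V. col v < k"
  shows "unmatched_have_matched_parent (greedy_matching col k)"
  using assms greedy_matching_parent_matched by (simp add: unmatched_have_matched_parent_def)

end

abbreviation matched :: "(nat \<Rightarrow> nat) \<Rightarrow> nat set" where
  "matched m \<equiv> {v\<in>V. m v \<noteq> 0}"

definition unmatched_children :: "(nat \<Rightarrow> nat) \<Rightarrow> nat \<Rightarrow> nat set" where
  "unmatched_children m u = {i. i < deg V E u \<and> parent (port u i) = u \<and> m (port u i) = 0}"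

definition split_colour :: "(nat \<Rightarrow> nat) \<Rightarrow> nat \<Rightarrow> bool" where
  "split_colour m v =
     (if m v = 0 then odd (card {i \<in> unmatched_children m (parent v). i < port_at_parent v})
      else 2 \<le> m v)"

lemma finite_unmatched_children: "finite (unmatched_children m u)"
  by (rule finite_subset[of _ "{..<deg V E u}"]) (auto simp: unmatched_children_def)

lemma unmatched_child:
  assumes "u \<in> V" "i \<in> unmatched_children m u"
  shows "port u i \<in> V \<and> parent (port u i) = u \<and> m (port u i) = 0 \<and> port_at_parent (port u i) = i"
  using assms port_neighbour back_port_eq
  unfolding unmatched_children_def port_at_parent_def by auto

lemma split_colour_unmatched_child:
  "u \<in> V \<Longrightarrow> i \<in> unmatched_children m u \<Longrightarrow>
     split_colour m (port u i) = odd (card {j \<in> unmatched_children m u. j < i})"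
  using unmatched_child by (simp add: split_colour_def)

lemma split_colour_matched: "m v \<noteq> 0 \<Longrightarrow> split_colour m v \<longleftrightarrow> 2 \<le> m v"
  by (simp add: split_colour_def)

lemma card_Un_ports_unmatched_children:
  assumes "D \<subseteq> matched m" "\<And>u. A u \<subseteq> unmatched_children m u"
  shows "card (D \<union> (\<Union>u\<in>matched m. port u ` A u)) = card D + (\<Sum>u\<in>matched m. card (A u))"
proof -
  have finite_A: "finite (A u)" for u
    using assms(2) finite_unmatched_children by (rule finite_subset)
  have child: "port u i \<in> V \<and> parent (port u i) = u \<and> m (port u i) = 0"
    if "u \<in> matched m" "i \<in> A u" for u i
    using unmatched_child that assms(2) by blast
  have "card (\<Union>u\<in>matched m. port u ` A u) = (\<Sum>u\<in>matched m. card (port u ` A u))"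
  proof (rule card_UN_disjoint)
    show "\<forall>u\<in>matched m. \<forall>u'\<in>matched m. u \<noteq> u' \<longrightarrow> port u ` A u \<inter> port u' ` A u' = {}"
    proof (intro ballI impI)
      fix u u'
      assume u: "u \<in> matched m" and u': "u' \<in> matched m" and "u \<noteq> u'"
      show "port u ` A u \<inter> port u' ` A u' = {}"
      proof (rule equals0I)
        fix x
        assume "x \<in> port u ` A u \<inter> port u' ` A u'"
        then have "parent x = u" "parent x = u'"
          using child u u' by auto
        with \<open>u \<noteq> u'\<close> show False
          by simp
      qed
    qed
  qed (use finite_V finite_A in auto)
  also have "\<dots> = (\<Sum>u\<in>matched m. card (A u))"
  proof (rule sum.cong)
    show "card (port u ` A u) = card (A u)" if "u \<in> matched m" for u
      using inj_on_port that assms(2) unfolding unmatched_children_def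
      by (intro card_image) (auto intro: inj_on_subset)
  qed simp
  finally show ?thesis
    using assms(1) child finite_V finite_A
    by (subst card_Un_disjoint) (auto intro: finite_subset)
qed

context
  fixes m :: "nat \<Rightarrow> nat"
  assumes matching: "matching m" and covered: "unmatched_have_matched_parent m"
begin

lemma card_matched_children_le_parents: "card {v\<in>V. m v = 1} \<le> card {v\<in>V. 2 \<le> m v}"
proof (rule card_inj_on_le)
  show "inj_on parent {v\<in>V. m v = 1}"
  proof (rule inj_onI)
    fix x y
    assume x: "x \<in> {v\<in>V. m v = 1}" and y: "y \<in> {v\<in>V. m v = 1}" and "parent x = parent y"
    have "m (parent x) = port_at_parent x + 2" "m (parent y) = port_at_parent y + 2"
      using matching x y by (auto simp: matching_def)
    with \<open>parent x = parent y\<close> have "port_at_parent x = port_at_parent y"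
      by simp
    moreover have "port (parent x) (port_at_parent x) = x" "port (parent y) (port_at_parent y) = y"
      using port_at_parent x y by auto
    ultimately show "x = y"
      using \<open>parent x = parent y\<close> by metis
  qed
  show "parent ` {v\<in>V. m v = 1} \<subseteq> {v\<in>V. 2 \<le> m v}"
    using matching parent by (auto simp: matching_def)
qed (use finite_V in simp)

lemma card_matched_parents_le_children: "card {v\<in>V. 2 \<le> m v} \<le> card {v\<in>V. m v = 1}"
proof (rule card_inj_on_le)
  let ?child = "\<lambda>u. port u (m u - 2)"
  have child: "?child u \<in> V \<and> parent (?child u) = u \<and> m (?child u) = 1" if "u \<in> V" "2 \<le> m u" for u
  proof -
    have "m u = (m u - 2) + 2"
      using that by simp
    then have "m u - 2 < deg V E u \<and> parent (?child u) = u \<and> m (?child u) = 1"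
      using matching that unfolding matching_def by blast
    then show ?thesis
      using port_neighbour that by blast
  qed
  show "inj_on ?child {v\<in>V. 2 \<le> m v}"
  proof (rule inj_onI)
    fix x y
    assume x: "x \<in> {v\<in>V. 2 \<le> m v}" and y: "y \<in> {v\<in>V. 2 \<le> m v}"
      and eq: "?child x = ?child y"
    have "x = parent (?child x)"
      using child x by simp
    also have "\<dots> = parent (?child y)"
      by (simp only: eq)
    also have "\<dots> = y"
      using child y by simp
    finally show "x = y" .
  qed
  show "?child ` {v\<in>V. 2 \<le> m v} \<subseteq> {v\<in>V. m v = 1}"
    using child by auto
qed (use finite_V in simp)

lemma card_V_eq: "card V = card (matched m) + (\<Sum>u\<in>matched m. card (unmatched_children m u))"
proof -
  have "V = matched m \<union> (\<Union>u\<in>matched m. port u ` unmatched_children m u)"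
  proof (intro equalityI subsetI)
    fix v
    assume "v \<in> V"
    show "v \<in> matched m \<union> (\<Union>u\<in>matched m. port u ` unmatched_children m u)"
    proof (cases "m v = 0")
      case True
      then have "parent v \<in> matched m"
        using covered parent \<open>v \<in> V\<close> by (auto simp: unmatched_have_matched_parent_def)
      moreover have "port_at_parent v \<in> unmatched_children m (parent v)"
        using port_at_parent[OF \<open>v \<in> V\<close>] True by (simp add: unmatched_children_def)
      moreover have "v = port (parent v) (port_at_parent v)"
        using port_at_parent[OF \<open>v \<in> V\<close>] by simp
      ultimately show ?thesis
        by blast
    qed (use \<open>v \<in> V\<close> in auto)
  qed (use unmatched_child in auto)
  then have "card V = card (matched m \<union> (\<Union>u\<in>matched m. port u ` unmatched_children m u))"
    by (rule arg_cong)
  also have "\<dots> = card (matched m) + (\<Sum>u\<in>matched m. card (unmatched_children m u))"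
    by (rule card_Un_ports_unmatched_children) auto
  finally show ?thesis .
qed

lemma card_blue_ge:
  "card {v\<in>V. 2 \<le> m v} + (\<Sum>u\<in>matched m. card (unmatched_children m u) div 2)
     \<le> card {v\<in>V. split_colour m v}"
proof -
  let ?A = "\<lambda>u. {i \<in> unmatched_children m u. odd (card {j \<in> unmatched_children m u. j < i})}"
  have "card {v\<in>V. 2 \<le> m v} + (\<Sum>u\<in>matched m. card (?A u))
      = card ({v\<in>V. 2 \<le> m v} \<union> (\<Union>u\<in>matched m. port u ` ?A u))"
    by (rule card_Un_ports_unmatched_children[symmetric]) auto
  also have "\<dots> \<le> card {v\<in>V. split_colour m v}"
    using finite_V
    by (intro card_mono)
      (auto simp: split_colour_matched split_colour_unmatched_child unmatched_child)
  finally show ?thesis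
    using card_odd_rank[OF finite_unmatched_children] by simp
qed

lemma card_red_ge:
  "card {v\<in>V. m v = 1}
     + (\<Sum>u\<in>matched m. card (unmatched_children m u) - card (unmatched_children m u) div 2)
     \<le> card {v\<in>V. \<not> split_colour m v}"
proof -
  let ?A = "\<lambda>u. {i \<in> unmatched_children m u. even (card {j \<in> unmatched_children m u. j < i})}"
  have "card {v\<in>V. m v = 1} + (\<Sum>u\<in>matched m. card (?A u))
      = card ({v\<in>V. m v = 1} \<union> (\<Union>u\<in>matched m. port u ` ?A u))"
    by (rule card_Un_ports_unmatched_children[symmetric]) auto
  also have "\<dots> \<le> card {v\<in>V. \<not> split_colour m v}"
    using finite_V
    by (intro card_mono)
      (auto simp: split_colour_matched split_colour_unmatched_child unmatched_child)
  finally show ?thesis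
    using card_even_rank[OF finite_unmatched_children] by simp
qed

theorem split_colour_balanced:
  "4 * card {v\<in>V. split_colour m v} \<le> 3 * card V \<and> 4 * card {v\<in>V. \<not> split_colour m v} \<le> 3 * card V"
proof -
  have "card (matched m) = card {v\<in>V. m v = 1} + card {v\<in>V. 2 \<le> m v}"
    using finite_V by (subst card_Un_disjoint[symmetric]) (auto intro: arg_cong[where f = card])
  moreover have "card {v\<in>V. 2 \<le> m v} = card {v\<in>V. m v = 1}"
    using card_matched_children_le_parents card_matched_parents_le_children
    by (rule antisym[rotated])
  ultimately have card_matched: "card (matched m) = 2 * card {v\<in>V. m v = 1}"
    by simp
  have card_V_split: "card V = card {v\<in>V. split_colour m v} + card {v\<in>V. \<not> split_colour m v}"
    using finite_V by (rule card_split_by_pred)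
  show ?thesis
    using card_blue_ge card_red_ge \<open>card {v\<in>V. 2 \<le> m v} = card {v\<in>V. m v = 1}\<close>
    by (intro quarter_split_bound[OF card_matched card_V_eq card_V_split]) simp_all
qed

end

end

section \<open>The algorithm\<close>

definition cv_rounds :: "nat \<Rightarrow> nat" where
  "cv_rounds b = log_star b + 2"

(* A state is [t, d, c, m, ...]: round t, degree d, colour c and matching status m in the
   encoding of matching.  Rounds cv_rounds b + 2 j and cv_rounds b + 2 j + 1 treat the colour
   class j.  From round cv_rounds b + 17 on, the tail lists the ports of the unmatched
   children, and finally it is the bit that colours an unmatched node. *)
definition rb_send :: "nat \<Rightarrow> nat list \<Rightarrow> nat \<Rightarrow> bool list" where
  "rb_send b s i = (let t = s ! 0; c = s ! 2; m = s ! 3; r = cv_rounds b in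
     if t < r then bits_of_nat b c
     else if t < r + 16 then
       (if even (t - r) then [i = 0 \<and> m = 0 \<and> c = (t - r) div 2] else [m = i + 2])
     else if t = r + 16 then [i = 0 \<and> m = 0]
     else [odd (card {j \<in> set (drop 4 s). j < i})])"

definition rb_trans :: "nat \<Rightarrow> nat list \<Rightarrow> (nat \<Rightarrow> bool list) \<Rightarrow> nat list" where
  "rb_trans b s msg = (let t = s ! 0; d = s ! 1; c = s ! 2; m = s ! 3; r = cv_rounds b in
     if t < r then [Suc t, d, cole_vishkin c (nat_of_bits (msg 0)), m]
     else if t < r + 16 then
       (if even (t - r) then
          [Suc t, d, c, if m = 0 \<and> c \<noteq> (t - r) div 2 \<and> (\<exists>i<d. msg i = [True])
                        then (LEAST i. i < d \<and> msg i = [True]) + 2 else m]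
        else [Suc t, d, c, if m = 0 \<and> c = (t - r) div 2 \<and> msg 0 = [True] then 1 else m])
     else if t = r + 16 then [Suc t, d, c, m] @ filter (\<lambda>i. msg i = [True]) [0..<d]
     else [Suc t, d, c, m, if msg 0 = [True] then 1 else 0])"

definition rb_out :: "nat list \<Rightarrow> bool" where
  "rb_out s = (if s ! 3 = 0 then s ! 4 = 1 else 2 \<le> s ! 3)"

definition red_blue :: algo where
  "red_blue = \<lparr>a_init = (\<lambda>b idv d. [0, d, idv, 0]), a_send = rb_send, a_trans = rb_trans,
     a_out = rb_out, a_rounds = (\<lambda>b. cv_rounds b + 18)\<rparr>"

lemma red_blue_simps [simp]:
  "a_init red_blue = (\<lambda>b idv d. [0, d, idv, 0])" "a_send red_blue = rb_send"
  "a_trans red_blue = rb_trans" "a_out red_blue = rb_out"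
  "a_rounds red_blue = (\<lambda>b. cv_rounds b + 18)"
  by (simp_all add: red_blue_def)

lemma length_rb_send: "0 < b \<Longrightarrow> length (rb_send b s i) \<le> b"
  by (simp add: rb_send_def Let_def)

locale congest_instance = ported_graph V E port
  for V :: "nat set" and E :: "nat \<Rightarrow> nat \<Rightarrow> bool" and port :: "nat \<Rightarrow> nat \<Rightarrow> nat" +
  fixes b :: nat and ident :: "nat \<Rightarrow> nat"
  assumes b_pos: "0 < b" and ids: "valid_ids V b ident"
begin

abbreviation state :: "nat \<Rightarrow> nat \<Rightarrow> nat list" where
  "state t v \<equiv> run red_blue V E b ident port t v"

lemma state_Suc:
  "state (Suc t) v = rb_trans b (state t v)
     (\<lambda>i. if i < deg V E v then rb_send b (state t (port v i)) (back_port V E port (port v i) v)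
          else [])"
  by (simp cong: if_cong)

primrec cv_colour :: "nat \<Rightarrow> nat \<Rightarrow> nat" where
  "cv_colour 0 v = ident v"
| "cv_colour (Suc k) v = cole_vishkin (cv_colour k v) (cv_colour k (parent v))"

lemma cv_colour_proper_less:
  "v \<in> V \<Longrightarrow> cv_colour k v \<noteq> cv_colour k (parent v) \<and> cv_colour k v < 2 ^ (next_width ^^ k) b"
proof (induction k arbitrary: v)
  case 0
  then show ?case
    using ids parent[OF 0] by (auto simp: valid_ids_def dest: inj_onD)
next
  case (Suc k)
  let ?L = "(next_width ^^ k) b"
  have "parent v \<in> V" "parent (parent v) \<in> V"
    using parent Suc.prems by auto
  then have "cv_colour k v \<noteq> cv_colour k (parent v)"
      "cv_colour k (parent v) \<noteq> cv_colour k (parent (parent v))"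
      "cv_colour k v < 2 ^ ?L" "cv_colour k (parent v) < 2 ^ ?L"
    using Suc by auto
  then have "cv_colour (Suc k) v \<noteq> cv_colour (Suc k) (parent v)" "cv_colour (Suc k) v < 2 * ?L"
    using cole_vishkin_neq cole_vishkin_less by auto
  then show ?case
    using next_width_spec[of ?L] by simp
qed

lemma cv_colour_less_two_power:
  assumes "v \<in> V"
  shows "cv_colour k v < 2 ^ b"
proof -
  have "cv_colour k v < 2 ^ (next_width ^^ k) b"
    using cv_colour_proper_less[OF assms] by blast
  also have "\<dots> \<le> 2 ^ b"
    using funpow_next_width_le by (intro power_increasing) auto
  finally show ?thesis .
qed

abbreviation reduced_colour :: "nat \<Rightarrow> nat" where
  "reduced_colour \<equiv> cv_colour (cv_rounds b)"

lemma reduced_colour_less_8: "v \<in> V \<Longrightarrow> reduced_colour v < 8"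
proof -
  assume "v \<in> V"
  then have "reduced_colour v < 2 ^ (next_width ^^ cv_rounds b) b"
    using cv_colour_proper_less by blast
  also have "\<dots> \<le> 2 ^ 3"
    using funpow_next_width_log_star[OF b_pos] unfolding cv_rounds_def
    by (intro power_increasing) auto
  finally show ?thesis
    by simp
qed

abbreviation final_matching :: "nat \<Rightarrow> nat" where
  "final_matching \<equiv> greedy_matching reduced_colour 8"

lemma state_cole_vishkin: "t \<le> cv_rounds b \<Longrightarrow> v \<in> V \<Longrightarrow> state t v = [t, deg V E v, cv_colour t v, 0]"
proof (induction t arbitrary: v)
  case (Suc t)
  have "parent v \<in> V"
    using parent Suc.prems by auto
  then have "rb_send b (state t (port v 0)) (back_port V E port (port v 0) v)
      = bits_of_nat b (cv_colour t (parent v))"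
    using Suc unfolding parent_def by (simp add: rb_send_def Let_def)
  moreover have "nat_of_bits (bits_of_nat b (cv_colour t (parent v))) = cv_colour t (parent v)"
    using cv_colour_less_two_power[OF \<open>parent v \<in> V\<close>] by (rule nat_of_bits_of_nat)
  ultimately show ?case
    using Suc deg_pos[OF Suc.prems(2)] by (simp add: rb_trans_def Let_def parent_def)
qed simp

lemma state_pick_child:
  assumes "j < 8" and "v \<in> V"
    and at_start: "\<And>w. w \<in> V \<Longrightarrow> state (cv_rounds b + 2 * j) w =
      [cv_rounds b + 2 * j, deg V E w, reduced_colour w, greedy_matching reduced_colour j w]"
  shows "state (Suc (cv_rounds b + 2 * j)) v = [Suc (cv_rounds b + 2 * j), deg V E v,
      reduced_colour v, pick_child reduced_colour (greedy_matching reduced_colour j) j v]"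
proof -
  let ?t = "cv_rounds b + 2 * j"
    and ?cand = "candidate reduced_colour (greedy_matching reduced_colour j) j v"
  define msg where "msg = (\<lambda>i. if i < deg V E v
    then rb_send b (state ?t (port v i)) (back_port V E port (port v i) v) else [])"
  have "msg i = [?cand i]" if "i < deg V E v" for i
  proof -
    have "port v i \<in> V" "E (port v i) v"
      using port_neighbour[OF \<open>v \<in> V\<close> that] edge_sym by auto
    then show ?thesis
      using that \<open>j < 8\<close> at_start back_port_eq_0_iff
      unfolding msg_def candidate_def by (simp add: rb_send_def Let_def)
  qed
  then have offers: "(\<lambda>i. i < deg V E v \<and> msg i = [True]) = ?cand"
    by (auto simp: candidate_def)
  have "state (Suc ?t) v = rb_trans b (state ?t v) msg"
    unfolding msg_def by (rule state_Suc)
  also have "\<dots> = [Suc ?t, deg V E v, reduced_colour v,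
      pick_child reduced_colour (greedy_matching reduced_colour j) j v]"
    using at_start[OF \<open>v \<in> V\<close>] \<open>j < 8\<close> offers[symmetric]
    by (simp add: rb_trans_def Let_def pick_child_def)
  finally show ?thesis .
qed

lemma state_matching_Suc:
  assumes "j < 8" and "v \<in> V"
    and at_start: "\<And>w. w \<in> V \<Longrightarrow> state (cv_rounds b + 2 * j) w =
      [cv_rounds b + 2 * j, deg V E w, reduced_colour w, greedy_matching reduced_colour j w]"
  shows "state (cv_rounds b + 2 * Suc j) v = [cv_rounds b + 2 * Suc j, deg V E v,
      reduced_colour v, greedy_matching reduced_colour (Suc j) v]"
proof -
  let ?t = "cv_rounds b + 2 * j"
    and ?h = "pick_child reduced_colour (greedy_matching reduced_colour j) j"
  define msg where "msg = (\<lambda>i. if i < deg V E v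
    then rb_send b (state (Suc ?t) (port v i)) (back_port V E port (port v i) v) else [])"
  have "parent v \<in> V"
    using parent \<open>v \<in> V\<close> by auto
  have "msg 0 = [?h (parent v) = port_at_parent v + 2]"
    using state_pick_child[OF \<open>j < 8\<close> \<open>parent v \<in> V\<close> at_start] deg_pos[OF \<open>v \<in> V\<close>] \<open>j < 8\<close>
    unfolding msg_def port_at_parent_def parent_def[symmetric] by (simp add: rb_send_def Let_def)
  have "state (cv_rounds b + 2 * Suc j) v = state (Suc (Suc ?t)) v"
    by simp
  also have "\<dots> = rb_trans b (state (Suc ?t) v) msg"
    unfolding msg_def by (rule state_Suc)
  also have "\<dots> = [cv_rounds b + 2 * Suc j, deg V E v, reduced_colour v,
      greedy_matching reduced_colour (Suc j) v]"
    using state_pick_child[OF \<open>j < 8\<close> \<open>v \<in> V\<close> at_start] \<open>msg 0 = _\<close> \<open>j < 8\<close>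
    by (simp add: rb_trans_def Let_def pick_child_def)
  finally show ?thesis .
qed

lemma state_matching:
  "j \<le> 8 \<Longrightarrow> v \<in> V \<Longrightarrow> state (cv_rounds b + 2 * j) v =
     [cv_rounds b + 2 * j, deg V E v, reduced_colour v, greedy_matching reduced_colour j v]"
proof (induction j arbitrary: v)
  case 0
  then show ?case
    using state_cole_vishkin by simp
next
  case (Suc j)
  then show ?case
    using state_matching_Suc[of j] by simp
qed

lemma state_announce:
  assumes "v \<in> V"
  shows "state (cv_rounds b + 17) v =
    [cv_rounds b + 17, deg V E v, reduced_colour v, final_matching v]
      @ filter (\<lambda>i. i \<in> unmatched_children final_matching v) [0..<deg V E v]"
proof -
  let ?t = "cv_rounds b + 2 * 8"
  define msg where "msg = (\<lambda>i. if i < deg V E v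
    then rb_send b (state ?t (port v i)) (back_port V E port (port v i) v) else [])"
  have "msg i = [i \<in> unmatched_children final_matching v]" if "i < deg V E v" for i
  proof -
    have "port v i \<in> V" "E (port v i) v"
      using port_neighbour[OF assms that] edge_sym by auto
    then show ?thesis
      using that state_matching[of 8] back_port_eq_0_iff
      unfolding msg_def unmatched_children_def by (simp add: rb_send_def Let_def)
  qed
  then have "filter (\<lambda>i. msg i = [True]) [0..<deg V E v]
      = filter (\<lambda>i. i \<in> unmatched_children final_matching v) [0..<deg V E v]"
    by (intro filter_cong) auto
  moreover have "state (cv_rounds b + 17) v = rb_trans b (state ?t v) msg"
    unfolding msg_def using state_Suc[of ?t] by (simp add: numeral_eq_Suc)
  ultimately show ?thesis
    using state_matching[of 8, OF _ assms] by (simp add: rb_trans_def Let_def)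
qed

lemma state_final:
  assumes "v \<in> V"
  shows "state (cv_rounds b + 18) v =
    [cv_rounds b + 18, deg V E v, reduced_colour v, final_matching v,
     if odd (card {i \<in> unmatched_children final_matching (parent v). i < port_at_parent v})
     then 1 else 0]"
proof -
  let ?t = "cv_rounds b + 17" and ?F = "unmatched_children final_matching (parent v)"
  define msg where "msg = (\<lambda>i. if i < deg V E v
    then rb_send b (state ?t (port v i)) (back_port V E port (port v i) v) else [])"
  have "parent v \<in> V"
    using parent assms by auto
  have "msg 0 = rb_send b (state ?t (parent v)) (port_at_parent v)"
    using deg_pos[OF assms] by (simp add: msg_def parent_def port_at_parent_def)
  also have "\<dots> = [odd (card {i \<in> set (filter (\<lambda>i. i \<in> ?F) [0..<deg V E (parent v)]).
      i < port_at_parent v})]"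
    using state_announce[OF \<open>parent v \<in> V\<close>] by (simp add: rb_send_def Let_def)
  also have "set (filter (\<lambda>i. i \<in> ?F) [0..<deg V E (parent v)]) = ?F"
    by (auto simp: unmatched_children_def)
  finally have "msg 0 = [odd (card {i \<in> ?F. i < port_at_parent v})]" .
  moreover have "state (cv_rounds b + 18) v = rb_trans b (state ?t v) msg"
    unfolding msg_def using state_Suc[of ?t] by (simp add: numeral_eq_Suc)
  ultimately show ?thesis
    using state_announce[OF assms] by (simp add: rb_trans_def Let_def)
qed

lemma output_colour_eq_split_colour:
  "v \<in> V \<Longrightarrow> output_colour red_blue V E b ident port v = split_colour final_matching v"
  using state_final by (simp add: output_colour_def rb_out_def split_colour_def)

lemma output_colour_balanced:
  "4 * card {v\<in>V. output_colour red_blue V E b ident port v} \<le> 3 * card V \<and>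
   4 * card {v\<in>V. \<not> output_colour red_blue V E b ident port v} \<le> 3 * card V"
proof -
  have proper: "\<forall>v\<in>V. reduced_colour v \<noteq> reduced_colour (parent v)"
    using cv_colour_proper_less by blast
  have "{v\<in>V. output_colour red_blue V E b ident port v} = {v\<in>V. split_colour final_matching v}"
    "{v\<in>V. \<not> output_colour red_blue V E b ident port v} = {v\<in>V. \<not> split_colour final_matching v}"
    using output_colour_eq_split_colour by auto
  moreover have "matching final_matching"
    using proper by (rule matching_greedy_matching)
  moreover have "unmatched_have_matched_parent final_matching"
    using proper reduced_colour_less_8 by (intro unmatched_have_matched_parent_greedy_matching) auto
  ultimately show ?thesis
    using split_colour_balanced by simp
qed

end

theorem lemma3p1:
  shows "\<exists>(A::algo) (C::nat).
     (\<forall>b\<ge>1. a_rounds A b \<le> C * log_star b + C) \<and>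
     (\<forall>V E b ident port.
        simple_graph V E \<and> no_isolated V E \<and> b \<ge> 1 \<and> valid_ids V b ident
        \<and> port_numbering V E port \<longrightarrow>
          congest_bandwidth A C V E b ident port \<and>
          4 * card {v\<in>V. output_colour A V E b ident port v} \<le> 3 * card V \<and>
          4 * card {v\<in>V. \<not> output_colour A V E b ident port v} \<le> 3 * card V)"
proof (intro exI[of _ red_blue] exI[of _ 20] conjI allI impI)
  show "a_rounds red_blue b \<le> 20 * log_star b + 20" for b
    by (simp add: cv_rounds_def)
next
  fix V E b ident port
  assume "simple_graph V E \<and> no_isolated V E \<and> b \<ge> 1 \<and> valid_ids V b ident
    \<and> port_numbering V E port"
  then interpret congest_instance V E port b ident
    by unfold_locales auto
  have "length (rb_send b s i) \<le> 20 * b" for s i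
    using length_rb_send[OF b_pos, of s i] by linarith
  then show "congest_bandwidth red_blue 20 V E b ident port"
    by (simp add: congest_bandwidth_def)
  show "4 * card {v\<in>V. output_colour red_blue V E b ident port v} \<le> 3 * card V"
    "4 * card {v\<in>V. \<not> output_colour red_blue V E b ident port v} \<le> 3 * card V"
    using output_colour_balanced by auto
qed

end
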